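(* In the semi-discrete heat setting described in the context, assume that the reference state $u$ satisfies the discrete non-degeneracy condition: for all $t>0$ and all $j\in\{1,\dots,N-1\}$, $\frac12u_{(2,j)}(t)-2u_{(1,j)}(t)\neq0$. Let $c\in\mathcal{F}(\mathring\Omega_h)$ and let $X$ solve $-\partial_tX+AX=c\,\delta_{t=T}$, $X(0)=0$. If \[\int_0^T\sum_{m\in\mathring\Omega_h}X_m(t)\big[\langle A'(0),\mu(t)V_j\rangle u(t)\big]_m\,dt=0\] for all $j\in\{1,\dots,N-1\}$ and all $\mu\in C_0^\infty(\mathbb{R}^+,\mathbb{R})$, then $X|_{\Gamma^1}\equiv0$, i.e. $X_{(1,j)}(t)=0$ for all $t>0$ and all $j\in\{1,\dots,N-1\}$.
   Context: Let $h>0$, integers $M,N\ge2$, grid $\Omega_h=\{(ih,jh):0\le i\le M,0\le j\le N\}$ with nodes indexed $(i,j)$, interior $\mathring\Omega_h=\{1\le i\le M-1,1\le j\le N-1\}$, $\Gamma^1=\{(1,j):1\le j\le N-1\}$; functions on $\mathring\Omega_h$ are extended by $0$ on boundary nodes. Perturbations are $\varphi(t)=\sum_jh\lambda_j(t)V_j$ ($V_j$ the unit horizontal vector at boundary node $(0,j)$), and $A(\varphi)$ is the 5-point operator $[A(\varphi)\phi]_{(i,j)}=h^{-2}(4\phi_{(i,j)}-\phi_{(i+1,j)}-\phi_{(i-1,j)}-\phi_{(i,j+1)}-\phi_{(i,j-1)})$ off $\Gamma^1$ and $[A(\varphi)\phi]_{(1,j)}=h^{-2}\big(2(1+\frac{1}{1+\lambda_j(t)})\phi_{(1,j)}-\frac{2}{2+\lambda_j(t)}\phi_{(2,j)}-\phi_{(1,j+1)}-\phi_{(1,j-1)}\big)$;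 $A=A(0)$. $\langle A'(0),\mu V_j\rangle$ denotes the derivative of $A(\cdot)$ at $0$ in the direction where $\lambda_j=\mu$ and $\lambda_k=0$ for $k\ne j$. The reference state $u$ solves $\partial_tu+Au=F$, $u(0)=u_0$ for given source $F$ and initial datum $u_0$. $c\,\delta_{t=T}$ acts by $\langle c\,\delta_{t=T},v\rangle=\sum_mc_mv_m(T)$. *)

theory Defs
  imports "HOL-Analysis.Analysis"
begin

text \<open>Grid nodes are pairs (i,j) of naturals; grid functions are maps nat \<times> nat \<Rightarrow> real,
  of which only the values on the interior nodes are relevant.\<close>

definition interior_nodes :: "nat \<Rightarrow> nat \<Rightarrow> (nat \<times> nat) set" where
  "interior_nodes M N = {(i, j). 1 \<le> i \<and> i \<le> M - 1 \<and> 1 \<le> j \<and> j \<le> N - 1}"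

definition ext0 :: "nat \<Rightarrow> nat \<Rightarrow> (nat \<times> nat \<Rightarrow> real) \<Rightarrow> (nat \<times> nat \<Rightarrow> real)" where
  "ext0 M N \<phi> = (\<lambda>m. if m \<in> interior_nodes M N then \<phi> m else 0)"

text \<open>The perturbed 5-point operator A(\<phi>), \<phi> = \<Sum>_j h \<lambda>_j V_j, parametrised by the
  coefficients lam j = \<lambda>_j.  Row i = 1 is the row \<Gamma>^1.\<close>
definition Aop :: "nat \<Rightarrow> nat \<Rightarrow> real \<Rightarrow> (nat \<Rightarrow> real) \<Rightarrow> (nat \<times> nat \<Rightarrow> real) \<Rightarrow> (nat \<times> nat \<Rightarrow> real)" where
  "Aop M N h lam \<phi> = (\<lambda>(i, j). let p = ext0 M N \<phi> in
     if i = 1 then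
       (2 * (1 + 1 / (1 + lam j)) * p (1, j) - 2 / (2 + lam j) * p (2, j)
          - p (1, j + 1) - p (1, j - 1)) / h\<^sup>2
     else
       (4 * p (i, j) - p (i + 1, j) - p (i - 1, j) - p (i, j + 1) - p (i, j - 1)) / h\<^sup>2)"

definition A0 :: "nat \<Rightarrow> nat \<Rightarrow> real \<Rightarrow> (nat \<times> nat \<Rightarrow> real) \<Rightarrow> (nat \<times> nat \<Rightarrow> real)" where
  "A0 M N h = Aop M N h (\<lambda>_. 0)"

text \<open>[<A'(0), a V_j> \<phi>]_m : derivative at 0 of A(\<cdot>) in the direction \<lambda>_j = a, \<lambda>_k = 0 (k \<noteq> j).\<close>
definition dA :: "nat \<Rightarrow> nat \<Rightarrow> real \<Rightarrow> nat \<Rightarrow> real \<Rightarrow> (nat \<times> nat \<Rightarrow> real) \<Rightarrow> (nat \<times> nat \<Rightarrow> real)" where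
  "dA M N h j a \<phi> = (\<lambda>m. deriv (\<lambda>s. Aop M N h (\<lambda>k. if k = j then s * a else 0) \<phi> m) 0)"

definition C0_inf_pos :: "(real \<Rightarrow> real) \<Rightarrow> bool" where
  "C0_inf_pos \<mu> \<longleftrightarrow> (\<forall>k x. ((deriv ^^ k) \<mu>) differentiable (at x))
     \<and> (\<exists>a b. 0 < a \<and> (\<forall>t. t < a \<or> b < t \<longrightarrow> \<mu> t = 0))"

end

theory Submission
  imports Defs "HOL-Computational_Algebra.Polynomial"
begin

(* Only the row of A(\<phi>) at the node (1,j) depends on \<lambda>_j, and there
  [\<langle>A'(0), \<mu> V_j\<rangle> u]_(1,j) = \<mu> (u_(2,j)/2 - 2 u_(1,j)) / h^2.  The orthogonality hypothesis
  therefore says that G = X_(1,j) (u_(2,j)/2 - 2 u_(1,j)) integrates to zero against every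
  smooth \<mu> with compact support in (0,\<infinity>).  If G(t) \<noteq> 0, then G has constant sign near t by
  continuity, and a smooth bump supported there gives a nonzero integral; hence G = 0, and
  non-degeneracy yields X_(1,j) = 0.  The bumps are built from exp(-1/x), whose derivatives
  all have the form p(1/x) exp(-1/x) with p a polynomial. *)

fun differentiable_n_times :: "nat \<Rightarrow> (real \<Rightarrow> real) \<Rightarrow> bool" where
  "differentiable_n_times 0 f = True"
| "differentiable_n_times (Suc n) f =
     (\<exists>f'. (\<forall>x. (f has_real_derivative f' x) (at x)) \<and> differentiable_n_times n f')"

lemma differentiable_n_times_SucD:
  "differentiable_n_times (Suc n) f \<Longrightarrow> differentiable_n_times n f"
proof (induction n arbitrary: f)
  case (Suc n)
  then show ?case by (metis differentiable_n_times.simps(2))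
qed simp

lemma differentiable_n_times_const: "differentiable_n_times n (\<lambda>_. c)"
proof (induction n arbitrary: c)
  case (Suc n)
  then show ?case by (auto intro!: exI[of _ "\<lambda>_. 0"])
qed simp

lemma differentiable_n_times_add:
  "differentiable_n_times n f \<Longrightarrow> differentiable_n_times n g \<Longrightarrow>
   differentiable_n_times n (\<lambda>x. f x + g x)"
proof (induction n arbitrary: f g)
  case (Suc n)
  then obtain f' g' where "\<forall>x. (f has_real_derivative f' x) (at x)" "differentiable_n_times n f'"
    "\<forall>x. (g has_real_derivative g' x) (at x)" "differentiable_n_times n g'"
    by auto
  with Suc.IH show ?case by (auto intro!: exI[of _ "\<lambda>x. f' x + g' x"] DERIV_add)
qed simp

lemma differentiable_n_times_mult:
  "differentiable_n_times n f \<Longrightarrow> differentiable_n_times n g \<Longrightarrow>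
   differentiable_n_times n (\<lambda>x. f x * g x)"
proof (induction n arbitrary: f g)
  case (Suc n)
  obtain f' g' where f': "\<forall>x. (f has_real_derivative f' x) (at x)" "differentiable_n_times n f'"
    and g': "\<forall>x. (g has_real_derivative g' x) (at x)" "differentiable_n_times n g'"
    using Suc.prems by auto
  have "differentiable_n_times n (\<lambda>x. f' x * g x + g' x * f x)"
    using Suc.IH f' g' Suc.prems differentiable_n_times_SucD
    by (intro differentiable_n_times_add) blast+
  with f' g' show ?case by (auto intro!: exI[of _ "\<lambda>x. f' x * g x + g' x * f x"] DERIV_mult)
qed simp

lemma differentiable_n_times_compose_affine:
  "differentiable_n_times n f \<Longrightarrow> differentiable_n_times n (\<lambda>x. f (c * x + d))"
proof (induction n arbitrary: f)
  case (Suc n)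
  then obtain f' where f': "\<forall>x. (f has_real_derivative f' x) (at x)" "differentiable_n_times n f'"
    by auto
  have "((\<lambda>x. f (c * x + d)) has_real_derivative f' (c * x + d) * c) (at x)" for x
    using f'(1) by (auto intro!: DERIV_chain2[where f = f] derivative_eq_intros)
  moreover have "differentiable_n_times n (\<lambda>x. f' (c * x + d) * c)"
    using Suc.IH f'(2) by (intro differentiable_n_times_mult differentiable_n_times_const)
  ultimately show ?case by (auto intro!: exI[of _ "\<lambda>x. f' (c * x + d) * c"])
qed simp

lemma differentiable_n_times_deriv:
  assumes "differentiable_n_times (Suc n) f"
  shows "differentiable_n_times n (deriv f)"
proof -
  obtain f' where f': "\<forall>x. (f has_real_derivative f' x) (at x)" "differentiable_n_times n f'"
    using assms by auto
  then have "deriv f = f'" by (intro ext DERIV_imp_deriv) blast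
  with f' show ?thesis by simp
qed

lemma iterated_deriv_differentiable:
  assumes "\<And>n. differentiable_n_times n f"
  shows "(deriv ^^ k) f differentiable (at x)"
proof -
  have "differentiable_n_times n ((deriv ^^ k) f)" for n
    using assms by (induction k arbitrary: n) (simp_all add: differentiable_n_times_deriv)
  from this[of 1] show ?thesis by (auto simp: real_differentiable_def)
qed

definition exp_inv_poly :: "real poly \<Rightarrow> real \<Rightarrow> real" where
  "exp_inv_poly p x = (if 0 < x then poly p (inverse x) * exp (- inverse x) else 0)"

lemma poly_times_exp_neg_tendsto_0: "((\<lambda>y::real. poly p y * exp (- y)) \<longlongrightarrow> 0) at_top"
proof -
  have "((\<lambda>y. \<Sum>i\<le>degree p. coeff p i * (y ^ i / exp y)) \<longlongrightarrow> 0) at_top"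
    by (intro tendsto_null_sum tendsto_mult_right_zero tendsto_power_div_exp_0)
  then show ?thesis
    by (simp add: poly_altdef sum_divide_distrib exp_minus field_simps)
qed

lemma exp_inv_poly_tendsto_0: "(exp_inv_poly p \<longlongrightarrow> 0) (at_right 0)"
proof -
  have "((\<lambda>x. exp_inv_poly p (inverse x)) \<longlongrightarrow> 0) at_top"
  proof (rule Lim_transform_eventually[OF poly_times_exp_neg_tendsto_0])
    show "\<forall>\<^sub>F x in at_top. poly p x * exp (- x) = exp_inv_poly p (inverse x)"
      using eventually_gt_at_top[of 0] by eventually_elim (simp add: exp_inv_poly_def)
  qed
  then show ?thesis by (simp add: filterlim_at_right_to_top)
qed

lemma exp_inv_poly_has_derivative:
  "(exp_inv_poly p has_real_derivative exp_inv_poly ([:0, 0, 1:] * (p - pderiv p)) x) (at x)"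
proof (cases x "0::real" rule: linorder_cases)
  case less
  have "((\<lambda>_. 0) has_real_derivative 0) (at x)" by simp
  then have "(exp_inv_poly p has_real_derivative 0) (at x)"
    by (rule has_field_derivative_transform_within_open[where S = "{..<0}"])
       (use less in \<open>auto simp: exp_inv_poly_def\<close>)
  with less show ?thesis by (simp add: exp_inv_poly_def)
next
  case equal
  \<comment> \<open>for \<open>t > 0\<close> the difference quotient at 0 is again of the form \<open>exp_inv_poly\<close>\<close>
  have "((\<lambda>t. exp_inv_poly p t / t) \<longlongrightarrow> 0) (at_right 0)"
  proof (rule Lim_transform_eventually[OF exp_inv_poly_tendsto_0[of "[:0, 1:] * p"]])
    show "\<forall>\<^sub>F t in at_right 0. exp_inv_poly ([:0, 1:] * p) t = exp_inv_poly p t / t"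
      using eventually_at_right_less[of 0] by eventually_elim (simp add: exp_inv_poly_def field_simps)
  qed
  moreover have "((\<lambda>t. exp_inv_poly p t / t) \<longlongrightarrow> 0) (at_left 0)"
  proof (rule Lim_transform_eventually[OF tendsto_const])
    show "\<forall>\<^sub>F t in at_left 0. 0 = exp_inv_poly p t / t"
      using eventually_at_left_real[of "-1" 0] by (auto elim!: eventually_mono simp: exp_inv_poly_def)
  qed
  ultimately have "((\<lambda>t. exp_inv_poly p t / t) \<longlongrightarrow> 0) (at 0)"
    by (metis filterlim_split_at)
  then show ?thesis
    using equal by (simp add: DERIV_def exp_inv_poly_def)
next
  case greater
  have "((\<lambda>x. poly p (inverse x) * exp (- inverse x)) has_real_derivative
      poly ([:0, 0, 1:] * (p - pderiv p)) (inverse x) * exp (- inverse x)) (at x)"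
    using greater
    by (auto intro!: derivative_eq_intros DERIV_chain2[OF poly_DERIV]
        simp: algebra_simps power2_eq_square)
  then have "(exp_inv_poly p has_real_derivative
      poly ([:0, 0, 1:] * (p - pderiv p)) (inverse x) * exp (- inverse x)) (at x)"
    by (rule has_field_derivative_transform_within_open[where S = "{0<..}"])
       (use greater in \<open>auto simp: exp_inv_poly_def\<close>)
  with greater show ?thesis by (simp add: exp_inv_poly_def)
qed

lemma differentiable_n_times_exp_inv_poly: "differentiable_n_times n (exp_inv_poly p)"
proof (induction n arbitrary: p)
  case (Suc n)
  then show ?case by (auto intro: exp_inv_poly_has_derivative)
qed simp

definition bump :: "real \<Rightarrow> real \<Rightarrow> real \<Rightarrow> real" where
  "bump a b x = exp_inv_poly 1 (x - a) * exp_inv_poly 1 (b - x)"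

lemma differentiable_n_times_bump: "differentiable_n_times n (bump a b)"
proof -
  have "differentiable_n_times n (\<lambda>x. exp_inv_poly 1 (1 * x + - a))"
    and "differentiable_n_times n (\<lambda>x. exp_inv_poly 1 (- 1 * x + b))"
    by (intro differentiable_n_times_compose_affine differentiable_n_times_exp_inv_poly)+
  then show ?thesis
    unfolding bump_def by (auto intro: differentiable_n_times_mult)
qed

lemma bump_eq_0: "x \<le> a \<or> b \<le> x \<Longrightarrow> bump a b x = 0"
  by (auto simp: bump_def exp_inv_poly_def)

lemma bump_pos: "a < x \<Longrightarrow> x < b \<Longrightarrow> 0 < bump a b x"
  by (simp add: bump_def exp_inv_poly_def)

lemma bump_nonneg: "0 \<le> bump a b x"
  by (simp add: bump_def exp_inv_poly_def)

lemma continuous_on_bump: "continuous_on S (bump a b)"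
  using iterated_deriv_differentiable[OF differentiable_n_times_bump, of 0]
  by (simp add: differentiable_imp_continuous_within continuous_at_imp_continuous_on)

lemma C0_inf_pos_bump:
  assumes "0 < a" shows "C0_inf_pos (bump a b)"
  unfolding C0_inf_pos_def
  using iterated_deriv_differentiable[OF differentiable_n_times_bump] assms bump_eq_0[of _ a b]
  by (metis less_imp_le)

lemma eq_0_if_integrals_against_bumps_vanish:
  fixes G :: "real \<Rightarrow> real"
  assumes cont: "continuous_on {S..T} G" and t: "S < t" "t \<le> T"
    and vanish: "\<And>a b. S < a \<Longrightarrow> integral {S..T} (\<lambda>s. G s * bump a b s) = 0"
  shows "G t = 0"
proof (rule ccontr)
  assume Gt: "G t \<noteq> 0"
  obtain d where "d > 0" and near: "\<forall>s\<in>{S..T}. dist s t < d \<longrightarrow> dist (G s) (G t) < \<bar>G t\<bar>"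
    using cont t Gt unfolding continuous_on_iff by (metis atLeastAtMost_iff less_imp_le zero_less_abs_iff)
  define e where "e = min d (t - S)"
  define a where "a = t - e / 2"
  define b where "b = t + e / 2"
  have "0 < e" "e \<le> d" "e \<le> t - S" using \<open>d > 0\<close> t by (simp_all add: e_def)
  then have "S < a" by (simp add: a_def)
  define f where "f s = G s * bump a b s * G t" for s
  have "continuous_on (cbox S T) f"
    unfolding f_def by (auto intro!: continuous_intros continuous_on_bump cont)
  moreover have "0 \<le> f s" if "s \<in> box S T" for s
  proof (cases "a < s \<and> s < b")
    case True
    then have "dist s t < d"
      using \<open>e \<le> d\<close> unfolding a_def b_def by (simp add: dist_real_def abs_less_iff)
    then have "dist (G s) (G t) < \<bar>G t\<bar>"
      using near that by (simp add: box_real)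
    then have "0 < G s * G t"
      by (simp add: dist_real_def) (smt (verit) mult_neg_neg mult_pos_pos)
    then show ?thesis
      using bump_nonneg[of a b s] unfolding f_def
      by (metis less_imp_le mult.assoc mult.commute mult_nonneg_nonneg)
  next
    case False
    then have "bump a b s = 0" by (auto intro: bump_eq_0)
    then show ?thesis by (simp add: f_def)
  qed
  moreover have "(f has_integral 0) (cbox S T)"
  proof -
    have "f integrable_on cbox S T"
      using \<open>continuous_on (cbox S T) f\<close> by (rule integrable_continuous)
    moreover have "integral (cbox S T) f = 0"
      using vanish[OF \<open>S < a\<close>] by (simp add: f_def[abs_def])
    ultimately show ?thesis by (metis has_integral_integral)
  qed
  ultimately have "f t = 0"
    by (rule has_integral_0_cbox_imp_0) (use t in auto)
  moreover have "0 < bump a b t"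
    using \<open>0 < e\<close> by (intro bump_pos) (simp_all add: a_def b_def)
  ultimately show False
    using Gt by (simp add: f_def)
qed

lemma finite_interior_nodes: "finite (interior_nodes M N)"
  by (rule finite_subset[of _ "{0..M} \<times> {0..N}"]) (auto simp: interior_nodes_def)

lemma continuous_on_ext0:
  assumes "\<forall>m \<in> interior_nodes M N. continuous_on S (\<lambda>t. u t m)"
  shows "continuous_on S (\<lambda>t. ext0 M N (u t) m)"
  using assms by (cases "m \<in> interior_nodes M N") (auto simp: ext0_def)

lemma dA_eq_0_off_node:
  assumes "m \<noteq> (1, j)"
  shows "dA M N h j a \<phi> m = 0"
proof -
  have "(\<lambda>s. Aop M N h (\<lambda>k. if k = j then s * a else 0) \<phi> m) = (\<lambda>s. Aop M N h (\<lambda>_. 0) \<phi> m)"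
    using assms by (auto simp: Aop_def Let_def split: prod.split)
  then show ?thesis
    unfolding dA_def by (simp add: DERIV_imp_deriv[OF DERIV_const])
qed

lemma dA_at_node:
  "dA M N h j a \<phi> (1, j) = a * (ext0 M N \<phi> (2, j) / 2 - 2 * ext0 M N \<phi> (1, j)) / h\<^sup>2"
proof -
  define P Q R S where "P = ext0 M N \<phi> (1, j)" and "Q = ext0 M N \<phi> (2, j)"
    and "R = ext0 M N \<phi> (1, j + 1)" and "S = ext0 M N \<phi> (1, j - 1)"
  have "(\<lambda>s. Aop M N h (\<lambda>k. if k = j then s * a else 0) \<phi> (1, j))
      = (\<lambda>s. (2 * (1 + 1 / (1 + s * a)) * P - 2 / (2 + s * a) * Q - R - S) / h\<^sup>2)"
    by (auto simp: Aop_def Let_def P_def Q_def R_def S_def)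
  moreover have "((\<lambda>s. 2 * (1 + 1 / (1 + s * a)) * P - 2 / (2 + s * a) * Q - R - S)
      has_real_derivative a * (Q / 2 - 2 * P)) (at 0)"
    by (auto intro!: derivative_eq_intros simp: field_simps power2_eq_square)
  then have "((\<lambda>s. (2 * (1 + 1 / (1 + s * a)) * P - 2 / (2 + s * a) * Q - R - S) / h\<^sup>2)
      has_real_derivative a * (Q / 2 - 2 * P) / h\<^sup>2) (at 0)"
    by (rule DERIV_cdivide)
  ultimately show ?thesis
    unfolding dA_def P_def Q_def by (simp add: DERIV_imp_deriv)
qed

lemma sum_interior_mult_dA:
  assumes "(1, j) \<in> interior_nodes M N"
  shows "(\<Sum>m \<in> interior_nodes M N. Y m * dA M N h j a \<phi> m)
       = Y (1, j) * a * (ext0 M N \<phi> (2, j) / 2 - 2 * ext0 M N \<phi> (1, j)) / h\<^sup>2"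
proof -
  have "(\<Sum>m \<in> interior_nodes M N. Y m * dA M N h j a \<phi> m) = Y (1, j) * dA M N h j a \<phi> (1, j)"
    by (subst sum.remove[OF finite_interior_nodes assms]) (simp add: dA_eq_0_off_node)
  then show ?thesis unfolding dA_at_node by simp
qed

theorem proposition2p21:
  fixes h T :: real and M N :: nat
    and F u X :: "real \<Rightarrow> nat \<times> nat \<Rightarrow> real"
    and u0 c :: "nat \<times> nat \<Rightarrow> real"
  assumes h_pos: "h > 0" and M2: "M \<ge> 2" and N2: "N \<ge> 2" and T_pos: "T > 0"
    \<comment> \<open>reference state: \<partial>_t u + A u = F, u(0) = u0\<close>
    and u_cont: "\<forall>m \<in> interior_nodes M N. continuous_on {0..} (\<lambda>t. u t m)"
    and u_init: "\<forall>m \<in> interior_nodes M N. u 0 m = u0 m"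
    and u_eq: "\<forall>m \<in> interior_nodes M N. \<forall>t > 0.
                 ((\<lambda>s. u s m) has_real_derivative (F t m - A0 M N h (u t) m)) (at t)"
    \<comment> \<open>discrete non-degeneracy condition\<close>
    and nondeg: "\<forall>t > 0. \<forall>j \<in> {1..N-1}.
                   ext0 M N (u t) (2, j) / 2 - 2 * ext0 M N (u t) (1, j) \<noteq> 0"
    \<comment> \<open>adjoint state: -\<partial>_t X + A X = c \<delta>_{t=T}, i.e. X(T) = c, -X' + AX = 0 on (0,T), X = 0 after T\<close>
    and X_cont: "\<forall>m \<in> interior_nodes M N. continuous_on {0..T} (\<lambda>t. X t m)"
    and X_eq: "\<forall>m \<in> interior_nodes M N. \<forall>t \<in> {0<..<T}.
                 ((\<lambda>s. X s m) has_real_derivative (A0 M N h (X t) m)) (at t)"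
    and X_T: "\<forall>m \<in> interior_nodes M N. X T m = c m"
    and X_after: "\<forall>m \<in> interior_nodes M N. \<forall>t > T. X t m = 0"
    \<comment> \<open>orthogonality hypothesis\<close>
    and orth: "\<forall>j \<in> {1..N-1}. \<forall>\<mu>. C0_inf_pos \<mu> \<longrightarrow>
                 integral {0..T} (\<lambda>t. \<Sum>m \<in> interior_nodes M N.
                    X t m * dA M N h j (\<mu> t) (u t) m) = 0"
  shows "\<forall>t > 0. \<forall>j \<in> {1..N-1}. X t (1, j) = 0"
proof (intro allI impI ballI)
  fix t :: real and j :: nat
  assume "t > 0" and j: "j \<in> {1..N-1}"
  have node: "(1, j) \<in> interior_nodes M N" using M2 j by (auto simp: interior_nodes_def)
  show "X t (1, j) = 0"
  proof (cases "T < t")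
    case True
    then show ?thesis using X_after node by blast
  next
    case False
    define g where "g s = ext0 M N (u s) (2, j) / 2 - 2 * ext0 M N (u s) (1, j)" for s
    have cont: "continuous_on {0..T} (\<lambda>s. X s (1, j) * g s)"
      using X_cont node continuous_on_subset[OF continuous_on_ext0[OF u_cont]]
      unfolding g_def by (intro continuous_intros) auto
    have vanish: "integral {0..T} (\<lambda>s. X s (1, j) * g s * bump a b s) = 0" if "0 < a" for a b
    proof -
      have "integral {0..T} (\<lambda>s. \<Sum>m \<in> interior_nodes M N.
          X s m * dA M N h j (bump a b s) (u s) m) = 0"
        using orth j C0_inf_pos_bump[OF that] by blast
      then have "integral {0..T} (\<lambda>s. X s (1, j) * bump a b s * g s / h\<^sup>2) = 0"
        unfolding sum_interior_mult_dA[OF node] g_def by simp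
      then show ?thesis using h_pos by (simp add: mult.assoc mult.commute[of "g _"])
    qed
    have "X t (1, j) * g t = 0"
      by (rule eq_0_if_integrals_against_bumps_vanish[OF cont _ _ vanish])
         (use \<open>t > 0\<close> False in auto)
    moreover have "g t \<noteq> 0" using nondeg \<open>t > 0\<close> j by (simp add: g_def)
    ultimately show ?thesis by simp
  qed
qed

end
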